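(* Let $K_{m,n}$ be the complete bipartite graph with parts of sizes $m$ and $n$, and let $k$ be a positive integer with $m,n\geq k$ and $m\geq n$. Then $\gamma_{gr}^{k}(K_{m,n})=m+k-1$, $\gamma_{gr}^{L,k}(K_{m,n})=m+k$, $\gamma_{gr}^{t,k}(K_{m,n})=2k$, and $\gamma_{gr}^{Z,k}(K_{m,n})=2k$ if $m>k$ (and $n\geq k$), while $\gamma_{gr}^{Z,k}(K_{m,n})=2k-1$ if $m=n=k$.
   Context: For a vertex $v$, $N(v)$ is its open neighborhood and $N[v]=N(v)\cup\{v\}$. A sequence $S=(v_1,\ldots,v_m)$ of distinct vertices is a $k$-sequence (resp. $k$-$L$-sequence, $k$-$Z$-sequence, $k$-$t$-sequence) if for each $i$ there is a vertex $u_i$ with $u_i\in N[v_i]$ (resp. $N[v_i]$, $N(v_i)$, $N(v_i)$) such that the number of indices $j<i$ with $u_i\in N[v_j]$ (resp. $N(v_j)$, $N[v_j]$, $N(v_j)$) is less than $k$. The numbers $\gamma_{gr}^{k}(G)$, $\gamma_{gr}^{L,k}(G)$, $\gamma_{gr}^{Z,k}(G)$, $\gamma_{gr}^{t,k}(G)$ are the maximum lengths of such sequences, respectively. *)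

theory Defs
  imports Main
begin

(* Simple graphs: vertex set V, symmetric irreflexive adjacency E. *)
definition open_nbhd :: "('a \<Rightarrow> 'a \<Rightarrow> bool) \<Rightarrow> 'a \<Rightarrow> 'a set" where
  "open_nbhd E v = {u. E v u}"

definition closed_nbhd :: "('a \<Rightarrow> 'a \<Rightarrow> bool) \<Rightarrow> 'a \<Rightarrow> 'a set" where
  "closed_nbhd E v = insert v (open_nbhd E v)"

definition gen_k_seq ::
  "('a \<Rightarrow> 'a set) \<Rightarrow> ('a \<Rightarrow> 'a set) \<Rightarrow> nat \<Rightarrow> 'a set \<Rightarrow> 'a list \<Rightarrow> bool" where
  "gen_k_seq A B k V S \<longleftrightarrow> distinct S \<and> set S \<subseteq> V \<and>
     (\<forall>i < length S. \<exists>u \<in> V. u \<in> A (S ! i) \<and>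
        card {j. j < i \<and> u \<in> B (S ! j)} < k)"

definition k_seq :: "'a set \<Rightarrow> ('a \<Rightarrow> 'a \<Rightarrow> bool) \<Rightarrow> nat \<Rightarrow> 'a list \<Rightarrow> bool" where
  "k_seq V E k S = gen_k_seq (closed_nbhd E) (closed_nbhd E) k V S"

definition kL_seq :: "'a set \<Rightarrow> ('a \<Rightarrow> 'a \<Rightarrow> bool) \<Rightarrow> nat \<Rightarrow> 'a list \<Rightarrow> bool" where
  "kL_seq V E k S = gen_k_seq (closed_nbhd E) (open_nbhd E) k V S"

definition kZ_seq :: "'a set \<Rightarrow> ('a \<Rightarrow> 'a \<Rightarrow> bool) \<Rightarrow> nat \<Rightarrow> 'a list \<Rightarrow> bool" where
  "kZ_seq V E k S = gen_k_seq (open_nbhd E) (closed_nbhd E) k V S"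

definition kt_seq :: "'a set \<Rightarrow> ('a \<Rightarrow> 'a \<Rightarrow> bool) \<Rightarrow> nat \<Rightarrow> 'a list \<Rightarrow> bool" where
  "kt_seq V E k S = gen_k_seq (open_nbhd E) (open_nbhd E) k V S"

(* Maximum length of such a sequence (the empty sequence always qualifies). *)
definition gamma_gr :: "('a list \<Rightarrow> bool) \<Rightarrow> nat" where
  "gamma_gr P = Max {length S | S. P S}"

definition grundy_k :: "'a set \<Rightarrow> ('a \<Rightarrow> 'a \<Rightarrow> bool) \<Rightarrow> nat \<Rightarrow> nat" where
  "grundy_k V E k = gamma_gr (k_seq V E k)"
definition grundy_L :: "'a set \<Rightarrow> ('a \<Rightarrow> 'a \<Rightarrow> bool) \<Rightarrow> nat \<Rightarrow> nat" where
  "grundy_L V E k = gamma_gr (kL_seq V E k)"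
definition grundy_Z :: "'a set \<Rightarrow> ('a \<Rightarrow> 'a \<Rightarrow> bool) \<Rightarrow> nat \<Rightarrow> nat" where
  "grundy_Z V E k = gamma_gr (kZ_seq V E k)"
definition grundy_t :: "'a set \<Rightarrow> ('a \<Rightarrow> 'a \<Rightarrow> bool) \<Rightarrow> nat \<Rightarrow> nat" where
  "grundy_t V E k = gamma_gr (kt_seq V E k)"

definition Kmn_V :: "nat \<Rightarrow> nat \<Rightarrow> (nat + nat) set" where
  "Kmn_V m n = Inl ` {..<m} \<union> Inr ` {..<n}"

definition Kmn_E :: "nat \<Rightarrow> nat \<Rightarrow> (nat + nat) \<Rightarrow> (nat + nat) \<Rightarrow> bool" where
  "Kmn_E m n x y \<longleftrightarrow> (\<exists>i j. i < m \<and> j < n \<and>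
      ((x = Inl i \<and> y = Inr j) \<or> (x = Inr j \<and> y = Inl i)))"

end

theory Submission
  imports Defs
begin

(* Upper bounds come from two counting arguments. If for every vertex u at most c vertices w
   have u outside B(w), then the footprint u_i of the last vertex of a sequence lies in B(w) for
   fewer than k earlier w, so the sequence has length at most k + c; in K_{m,n} with m >= n this
   c is m for open and m - 1 for closed neighbourhoods, and k - 1 when m = n = k. If footprints
   are taken in open neighbourhoods, the footprint of a vertex lies in the opposite part and so
   in B(w) for every w of the vertex's own part: each part contributes at most k vertices.
   All bounds are attained by listing some left vertices first and then some right ones. *)

lemma in_open_nbhd_iff [simp]: "u \<in> open_nbhd E v \<longleftrightarrow> E v u"
  by (simp add: open_nbhd_def)

lemma in_closed_nbhd_iff [simp]: "u \<in> closed_nbhd E v \<longleftrightarrow> u = v \<or> E v u"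
  by (simp add: closed_nbhd_def)

lemma distinct_card_index_set:
  assumes "distinct xs"
  shows "card {j. j < length xs \<and> P (xs ! j)} = card {x \<in> set xs. P x}"
proof -
  have "card {j. j < length xs \<and> P (xs ! j)} = length (filter P xs)"
    by (rule length_filter_conv_card[symmetric])
  also have "\<dots> = card (set (filter P xs))"
    using distinct_card[OF distinct_filter[OF assms]] by simp
  finally show ?thesis by simp
qed

lemma gen_k_seq_snoc_iff:
  "gen_k_seq A B k V (S @ [v]) \<longleftrightarrow>
     gen_k_seq A B k V S \<and> v \<notin> set S \<and> v \<in> V \<and>
     (\<exists>u \<in> V. u \<in> A v \<and> card {w \<in> set S. u \<in> B w} < k)"
proof -
  have "card {j. j < length S \<and> u \<in> B (S ! j)} = card {w \<in> set S. u \<in> B w}"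
    if "distinct S" for u
    using that by (rule distinct_card_index_set)
  then show ?thesis
    unfolding gen_k_seq_def
    by (auto simp: nth_append less_Suc_eq all_conj_distrib cong: conj_cong)
qed

lemma gen_k_seq_length_le:
  assumes S: "gen_k_seq A B k V S" and "finite V"
    and c: "\<And>u. u \<in> V \<Longrightarrow> card {w \<in> V. u \<notin> B w} \<le> c"
  shows "length S \<le> k + c"
proof (cases S rule: rev_exhaust)
  case (snoc S' v)
  with S obtain u where "gen_k_seq A B k V S'" and "u \<in> V"
    and footprint: "card {w \<in> set S'. u \<in> B w} < k"
    by (auto simp: gen_k_seq_snoc_iff)
  then have "set S' \<subseteq> V" "distinct S'" by (auto simp: gen_k_seq_def)
  have "length S' = card (set S' \<inter> {w. u \<in> B w}) + card (set S' - {w. u \<in> B w})"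
    using distinct_card[OF \<open>distinct S'\<close>] card_Int_Diff[of "set S'"] by simp
  also have "card (set S' - {w. u \<in> B w}) \<le> card {w \<in> V. u \<notin> B w}"
    using \<open>set S' \<subseteq> V\<close> \<open>finite V\<close> by (intro card_mono) auto
  also have "\<dots> \<le> c"
    using c \<open>u \<in> V\<close> .
  finally show ?thesis
    using footprint snoc by (simp add: Int_def)
qed simp

lemma gen_k_seq_card_part_le:
  assumes "gen_k_seq A B k V S"
    and part: "\<And>v u. v \<in> P \<Longrightarrow> v \<in> V \<Longrightarrow> u \<in> V \<Longrightarrow> u \<in> A v \<Longrightarrow> P \<inter> V \<subseteq> {w. u \<in> B w}"
  shows "card (set S \<inter> P) \<le> k"
  using assms(1)
proof (induction S rule: rev_induct)
  case (snoc v S)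
  then obtain u where S: "gen_k_seq A B k V S" "v \<notin> set S" "v \<in> V" "u \<in> V" "u \<in> A v"
    and footprint: "card {w \<in> set S. u \<in> B w} < k"
    by (auto simp: gen_k_seq_snoc_iff)
  show ?case
  proof (cases "v \<in> P")
    case True
    have "set S \<inter> P \<subseteq> {w \<in> set S. u \<in> B w}"
      using part[OF True] S by (auto simp: gen_k_seq_def)
    then have "card (set S \<inter> P) \<le> card {w \<in> set S. u \<in> B w}"
      by (intro card_mono) auto
    with footprint True S show ?thesis
      by simp
  next
    case False
    then show ?thesis
      using snoc.IH S by simp
  qed
qed simp

lemma gen_k_seq_map_upt:
  assumes "inj_on f {..<N}" "f ` {..<N} \<subseteq> V"
    and "\<And>i. i < N \<Longrightarrow> \<exists>u \<in> V. u \<in> A (f i) \<and> card {j. j < i \<and> u \<in> B (f j)} < k"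
  shows "gen_k_seq A B k V (map f [0..<N])"
  using assms by (auto simp: gen_k_seq_def distinct_map atLeast0LessThan cong: conj_cong)

lemma gamma_gr_eqI:
  assumes "\<And>S. P S \<Longrightarrow> length S \<le> N" and "P S" and "length S = N"
  shows "gamma_gr P = N"
  unfolding gamma_gr_def
proof (rule Max_eqI)
  show "finite {length S |S. P S}"
    by (rule finite_subset[of _ "{..N}"]) (use assms(1) in auto)
qed (use assms in auto)

lemma Kmn_E_simps [simp]:
  "\<not> Kmn_E m n (Inl x) (Inl x')"
  "\<not> Kmn_E m n (Inr y) (Inr y')"
  "Kmn_E m n (Inl x) (Inr y) \<longleftrightarrow> x < m \<and> y < n"
  "Kmn_E m n (Inr y) (Inl x) \<longleftrightarrow> x < m \<and> y < n"
  by (auto simp: Kmn_E_def)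

lemma Kmn_V_simps [simp]:
  "Inl x \<in> Kmn_V m n \<longleftrightarrow> x < m"
  "Inr y \<in> Kmn_V m n \<longleftrightarrow> y < n"
  by (auto simp: Kmn_V_def)

lemma finite_Kmn_V: "finite (Kmn_V m n)"
  by (simp add: Kmn_V_def)

lemma Kmn_card_not_in_open_nbhd:
  assumes "u \<in> Kmn_V m n"
  shows "card {w \<in> Kmn_V m n. u \<notin> open_nbhd (Kmn_E m n) w} \<le> max m n"
proof (cases u)
  case (Inl x)
  with assms have "{w \<in> Kmn_V m n. u \<notin> open_nbhd (Kmn_E m n) w} = Inl ` {..<m}"
    by (auto simp: Kmn_V_def)
  then show ?thesis
    by (simp add: card_image)
next
  case (Inr y)
  with assms have "{w \<in> Kmn_V m n. u \<notin> open_nbhd (Kmn_E m n) w} = Inr ` {..<n}"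
    by (auto simp: Kmn_V_def)
  then show ?thesis
    by (simp add: card_image)
qed

lemma Kmn_card_not_in_closed_nbhd:
  assumes "u \<in> Kmn_V m n"
  shows "card {w \<in> Kmn_V m n. u \<notin> closed_nbhd (Kmn_E m n) w} \<le> max m n - 1"
proof (cases u)
  case (Inl x)
  with assms have "{w \<in> Kmn_V m n. u \<notin> closed_nbhd (Kmn_E m n) w} = Inl ` ({..<m} - {x})"
    by (auto simp: Kmn_V_def)
  then show ?thesis
    using Inl assms by (simp add: card_image)
next
  case (Inr y)
  with assms have "{w \<in> Kmn_V m n. u \<notin> closed_nbhd (Kmn_E m n) w} = Inr ` ({..<n} - {y})"
    by (auto simp: Kmn_V_def)
  then show ?thesis
    using Inr assms by (simp add: card_image)
qed

lemma Kmn_length_le_twice: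
  assumes S: "gen_k_seq (open_nbhd (Kmn_E m n)) B k (Kmn_V m n) S"
    and open_subset: "\<And>w. open_nbhd (Kmn_E m n) w \<subseteq> B w"
  shows "length S \<le> 2 * k"
proof -
  have "card (set S \<inter> range Inl) \<le> k"
    using S
    by (rule gen_k_seq_card_part_le) (use open_subset in \<open>fastforce simp: Kmn_V_def\<close>)
  moreover have "card (set S - range Inl) \<le> k"
    using S unfolding Diff_eq
    by (rule gen_k_seq_card_part_le) (use open_subset in \<open>fastforce simp: Kmn_V_def\<close>)
  moreover have "length S = card (set S \<inter> range Inl) + card (set S - range Inl)"
    using S by (simp add: gen_k_seq_def distinct_card card_Int_Diff[symmetric])
  ultimately show ?thesis
    by simp
qed

definition left_then_right :: "nat \<Rightarrow> nat \<Rightarrow> nat + nat" where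
  "left_then_right p i = (if i < p then Inl i else Inr (i - p))"

lemma Kmn_gen_k_seq_left_then_right:
  assumes "p \<le> m" "q \<le> n"
    and "\<And>i. i < p + q \<Longrightarrow> \<exists>u \<in> Kmn_V m n. u \<in> A (left_then_right p i) \<and>
           card {j. j < i \<and> u \<in> B (left_then_right p j)} < k"
  shows "gen_k_seq A B k (Kmn_V m n) (map (left_then_right p) [0..<p + q])"
proof (rule gen_k_seq_map_upt)
  show "inj_on (left_then_right p) {..<p + q}"
    by (auto simp: inj_on_def left_then_right_def split: if_splits)
  show "left_then_right p ` {..<p + q} \<subseteq> Kmn_V m n"
    using assms(1,2) by (auto simp: left_then_right_def)
qed (use assms(3) in blast)

lemma card_left_then_right_open_Inl:
  "card {j. j < i \<and> Inl x \<in> open_nbhd (Kmn_E m n) (left_then_right p j)} \<le> i - p"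
proof -
  have "card {j. j < i \<and> Inl x \<in> open_nbhd (Kmn_E m n) (left_then_right p j)} \<le> card {p..<i}"
    by (intro card_mono) (auto simp: left_then_right_def split: if_splits)
  then show ?thesis
    by simp
qed

lemma card_left_then_right_open_Inr:
  "card {j. j < i \<and> Inr y \<in> open_nbhd (Kmn_E m n) (left_then_right p j)} \<le> min i p"
proof -
  have "card {j. j < i \<and> Inr y \<in> open_nbhd (Kmn_E m n) (left_then_right p j)} \<le> card {..<min i p}"
    by (intro card_mono) (auto simp: left_then_right_def split: if_splits)
  then show ?thesis
    by simp
qed

lemma card_left_then_right_closed_Inl:
  "card {j. j < i \<and> Inl x \<in> closed_nbhd (Kmn_E m n) (left_then_right p j)}
     \<le> (i - p) + (if x < min i p then 1 else 0)"
proof -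
  have "card {j. j < i \<and> Inl x \<in> closed_nbhd (Kmn_E m n) (left_then_right p j)}
      \<le> card ({p..<i} \<union> (if x < min i p then {x} else {}))"
    by (intro card_mono) (auto simp: left_then_right_def split: if_splits)
  also have "\<dots> \<le> card {p..<i} + card (if x < min i p then {x} else {})"
    by (rule card_Un_le)
  finally show ?thesis
    by (simp split: if_splits)
qed

lemma card_left_then_right_closed_Inr:
  "card {j. j < i \<and> Inr y \<in> closed_nbhd (Kmn_E m n) (left_then_right p j)}
     \<le> min i p + (if p + y < i then 1 else 0)"
proof -
  have "card {j. j < i \<and> Inr y \<in> closed_nbhd (Kmn_E m n) (left_then_right p j)}
      \<le> card ({..<min i p} \<union> (if p + y < i then {p + y} else {}))"
    by (intro card_mono) (auto simp: left_then_right_def split: if_splits)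
  also have "\<dots> \<le> card {..<min i p} + card (if p + y < i then {p + y} else {})"
    by (rule card_Un_le)
  finally show ?thesis
    by (simp split: if_splits)
qed

lemma grundy_k_Kmn:
  assumes "0 < k" "k \<le> n" "n \<le> m"
  shows "grundy_k (Kmn_V m n) (Kmn_E m n) k = m + k - 1"
proof -
  let ?N = "closed_nbhd (Kmn_E m n)"
  have "\<exists>u \<in> Kmn_V m n. u \<in> ?N (left_then_right m i) \<and>
          card {j. j < i \<and> u \<in> ?N (left_then_right m j)} < k"
    if "i < m + (k - 1)" for i
  proof (cases "i < m")
    case True
    then show ?thesis
      using \<open>0 < k\<close>
      by (intro bexI[of _ "Inl i"] conjI le_less_trans[OF card_left_then_right_closed_Inl])
        (auto simp: left_then_right_def)
  next
    case False
    then show ?thesis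
      using that assms
      by (intro bexI[of _ "Inl 0"] conjI le_less_trans[OF card_left_then_right_closed_Inl])
        (auto simp: left_then_right_def)
  qed
  then have "k_seq (Kmn_V m n) (Kmn_E m n) k (map (left_then_right m) [0..<m + (k - 1)])"
    unfolding k_seq_def using assms by (intro Kmn_gen_k_seq_left_then_right) auto
  moreover have "length S \<le> m + k - 1" if "k_seq (Kmn_V m n) (Kmn_E m n) k S" for S
    using gen_k_seq_length_le[OF that[unfolded k_seq_def] finite_Kmn_V Kmn_card_not_in_closed_nbhd]
      assms by simp
  ultimately show ?thesis
    unfolding grundy_k_def using assms by (intro gamma_gr_eqI) auto
qed

lemma grundy_L_Kmn:
  assumes "0 < k" "k \<le> n" "n \<le> m"
  shows "grundy_L (Kmn_V m n) (Kmn_E m n) k = m + k"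
proof -
  have "\<exists>u \<in> Kmn_V m n. u \<in> closed_nbhd (Kmn_E m n) (left_then_right m i) \<and>
          card {j. j < i \<and> u \<in> open_nbhd (Kmn_E m n) (left_then_right m j)} < k"
    if "i < m + k" for i
  proof (cases "i < m")
    case True
    then show ?thesis
      using \<open>0 < k\<close>
      by (intro bexI[of _ "Inl i"] conjI le_less_trans[OF card_left_then_right_open_Inl])
        (auto simp: left_then_right_def)
  next
    case False
    then show ?thesis
      using that assms
      by (intro bexI[of _ "Inl 0"] conjI le_less_trans[OF card_left_then_right_open_Inl])
        (auto simp: left_then_right_def)
  qed
  then have "kL_seq (Kmn_V m n) (Kmn_E m n) k (map (left_then_right m) [0..<m + k])"
    unfolding kL_seq_def using assms by (intro Kmn_gen_k_seq_left_then_right) auto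
  moreover have "length S \<le> m + k" if "kL_seq (Kmn_V m n) (Kmn_E m n) k S" for S
    using gen_k_seq_length_le[OF that[unfolded kL_seq_def] finite_Kmn_V Kmn_card_not_in_open_nbhd]
      assms by simp
  ultimately show ?thesis
    unfolding grundy_L_def by (intro gamma_gr_eqI) auto
qed

lemma grundy_t_Kmn:
  assumes "0 < k" "k \<le> n" "k \<le> m"
  shows "grundy_t (Kmn_V m n) (Kmn_E m n) k = 2 * k"
proof -
  let ?N = "open_nbhd (Kmn_E m n)"
  have "\<exists>u \<in> Kmn_V m n. u \<in> ?N (left_then_right k i) \<and>
          card {j. j < i \<and> u \<in> ?N (left_then_right k j)} < k"
    if "i < k + k" for i
  proof (cases "i < k")
    case True
    then show ?thesis
      using assms
      by (intro bexI[of _ "Inr 0"] conjI le_less_trans[OF card_left_then_right_open_Inr])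
        (auto simp: left_then_right_def)
  next
    case False
    then show ?thesis
      using that assms
      by (intro bexI[of _ "Inl 0"] conjI le_less_trans[OF card_left_then_right_open_Inl])
        (auto simp: left_then_right_def)
  qed
  then have "kt_seq (Kmn_V m n) (Kmn_E m n) k (map (left_then_right k) [0..<k + k])"
    unfolding kt_seq_def using assms by (intro Kmn_gen_k_seq_left_then_right) auto
  moreover have "length S \<le> 2 * k" if "kt_seq (Kmn_V m n) (Kmn_E m n) k S" for S
    using that unfolding kt_seq_def by (rule Kmn_length_le_twice) simp
  ultimately show ?thesis
    unfolding grundy_t_def by (intro gamma_gr_eqI) auto
qed

lemma grundy_Z_Kmn:
  assumes "0 < k" "k \<le> n" "k < m"
  shows "grundy_Z (Kmn_V m n) (Kmn_E m n) k = 2 * k"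
proof -
  have "\<exists>u \<in> Kmn_V m n. u \<in> open_nbhd (Kmn_E m n) (left_then_right k i) \<and>
          card {j. j < i \<and> u \<in> closed_nbhd (Kmn_E m n) (left_then_right k j)} < k"
    if "i < k + k" for i
  proof (cases "i < k")
    case True
    then show ?thesis
      using assms
      by (intro bexI[of _ "Inr 0"] conjI le_less_trans[OF card_left_then_right_closed_Inr])
        (auto simp: left_then_right_def)
  next
    case False
    then show ?thesis
      using that assms
      by (intro bexI[of _ "Inl k"] conjI le_less_trans[OF card_left_then_right_closed_Inl])
        (auto simp: left_then_right_def)
  qed
  then have "kZ_seq (Kmn_V m n) (Kmn_E m n) k (map (left_then_right k) [0..<k + k])"
    unfolding kZ_seq_def using assms by (intro Kmn_gen_k_seq_left_then_right) auto
  moreover have "length S \<le> 2 * k" if "kZ_seq (Kmn_V m n) (Kmn_E m n) k S" for S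
    using that unfolding kZ_seq_def by (rule Kmn_length_le_twice) auto
  ultimately show ?thesis
    unfolding grundy_Z_def by (intro gamma_gr_eqI) auto
qed

lemma grundy_Z_Kkk:
  assumes "0 < k"
  shows "grundy_Z (Kmn_V k k) (Kmn_E k k) k = 2 * k - 1"
proof -
  have "\<exists>u \<in> Kmn_V k k. u \<in> open_nbhd (Kmn_E k k) (left_then_right k i) \<and>
          card {j. j < i \<and> u \<in> closed_nbhd (Kmn_E k k) (left_then_right k j)} < k"
    if "i < k + (k - 1)" for i
  proof (cases "i < k")
    case True
    then show ?thesis
      using assms
      by (intro bexI[of _ "Inr 0"] conjI le_less_trans[OF card_left_then_right_closed_Inr])
        (auto simp: left_then_right_def)
  next
    case False
    then show ?thesis
      using that assms
      by (intro bexI[of _ "Inl 0"] conjI le_less_trans[OF card_left_then_right_closed_Inl])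
        (auto simp: left_then_right_def)
  qed
  then have "kZ_seq (Kmn_V k k) (Kmn_E k k) k (map (left_then_right k) [0..<k + (k - 1)])"
    unfolding kZ_seq_def by (intro Kmn_gen_k_seq_left_then_right) auto
  moreover have "length S \<le> 2 * k - 1" if "kZ_seq (Kmn_V k k) (Kmn_E k k) k S" for S
    using gen_k_seq_length_le[OF that[unfolded kZ_seq_def] finite_Kmn_V Kmn_card_not_in_closed_nbhd]
      assms by simp
  ultimately show ?thesis
    unfolding grundy_Z_def using assms by (intro gamma_gr_eqI) auto
qed

theorem mainTheorem7:
  fixes m n k :: nat
  assumes "k > 0" and "m \<ge> k" and "n \<ge> k" and "m \<ge> n"
  shows "grundy_k (Kmn_V m n) (Kmn_E m n) k = m + k - 1 \<and>
         grundy_L (Kmn_V m n) (Kmn_E m n) k = m + k \<and>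
         grundy_t (Kmn_V m n) (Kmn_E m n) k = 2 * k \<and>
         (m > k \<longrightarrow> grundy_Z (Kmn_V m n) (Kmn_E m n) k = 2 * k) \<and>
         (m = k \<and> n = k \<longrightarrow> grundy_Z (Kmn_V m n) (Kmn_E m n) k = 2 * k - 1)"
  using assms grundy_k_Kmn grundy_L_Kmn grundy_t_Kmn grundy_Z_Kmn grundy_Z_Kkk by auto

end
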